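(* Let $F$ be a finite field, $m,n\ge1$, $T\in M_m(F)$, $S=\langle a_0,\dots,a_{n-1}\rangle\in F^n$, and let $f_T(\lambda)=\det(\lambda I_m-T)$, $f_S(\lambda)=a_0+a_1\lambda+\dots+a_{n-1}\lambda^{n-1}$. Let $f_{\langle T,S\rangle}(\lambda)=\sum_{i=0}^m c_i\lambda^{ni}f_S(\lambda)^{m-i}$, where $f_T=\sum_{i=0}^m c_i\lambda^i$ (this is the characteristic polynomial of the TSR step matrix $[\langle T,S\rangle]$). If $f_T$ is reducible over $F$, then $f_{\langle T,S\rangle}$ is reducible over $F$.
   Context: A polynomial over $F$ is reducible if it is a product of two polynomials of positive degree over $F$. *)

theory Defs
  imports "Jordan_Normal_Form.Char_Poly"
begin

definition reducible_poly :: "'a::field poly \<Rightarrow> bool" where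
  "reducible_poly p \<longleftrightarrow> (\<exists>g h. degree g > 0 \<and> degree h > 0 \<and> p = g * h)"

definition f_S :: "'a::field list \<Rightarrow> 'a poly" where
  "f_S S = Poly S"

definition f_TS :: "'a::field mat \<Rightarrow> 'a list \<Rightarrow> 'a poly" where
  "f_TS T S = (let m = dim_row T; n = length S; fT = char_poly T in
     (\<Sum>i=0..m. Polynomial.smult (coeff fT i) (monom 1 (n * i) * f_S S ^ (m - i))))"

end

theory Submission
  imports Defs
begin

text \<open>For a polynomial p of degree at most k, write hom_eval p k X Y for the degree-k
homogenization of p evaluated at (X, Y), i.e. Y^k p(X/Y). It is multiplicative in p, and
f_TS T S is the homogenization of the characteristic polynomial of T evaluated at
(x^n, f_S S). Since deg f_S < n, the top term dominates, so hom_eval q (deg q) x^n f_S has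
degree n deg q. A factorization of char_poly T into factors of positive degree therefore
yields a factorization of f_TS T S into factors of positive degree.\<close>

definition hom_eval :: "'a::comm_ring_1 poly \<Rightarrow> nat \<Rightarrow> 'a poly \<Rightarrow> 'a poly \<Rightarrow> 'a poly" where
  "hom_eval p k X Y = (\<Sum>i\<le>k. Polynomial.smult (coeff p i) (X ^ i * Y ^ (k - i)))"

lemma smult_sum_right: "Polynomial.smult c (\<Sum>x\<in>A. f x) = (\<Sum>x\<in>A. Polynomial.smult c (f x))"
  by (induction A rule: infinite_finite_induct) (simp_all add: smult_add_right)

lemma hom_eval_0 [simp]: "hom_eval 0 k X Y = 0"
  by (simp add: hom_eval_def)

lemma hom_eval_add: "hom_eval (p + q) k X Y = hom_eval p k X Y + hom_eval q k X Y"
  by (simp add: hom_eval_def smult_add_left sum.distrib)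

lemma hom_eval_smult: "hom_eval (Polynomial.smult c p) k X Y = Polynomial.smult c (hom_eval p k X Y)"
  by (simp add: hom_eval_def smult_sum_right)

lemma hom_eval_pCons_Suc:
  "hom_eval (pCons a p) (Suc k) X Y = Polynomial.smult a (Y ^ Suc k) + X * hom_eval p k X Y"
  unfolding hom_eval_def
  by (subst sum.atMost_Suc_shift) (simp add: sum_distrib_left mult.assoc)

lemma hom_eval_add_degree:
  assumes "degree p \<le> k"
  shows "hom_eval p (k + j) X Y = Y ^ j * hom_eval p k X Y"
proof -
  have "hom_eval p (k + j) X Y = (\<Sum>i\<le>k. Polynomial.smult (coeff p i) (X ^ i * Y ^ (k + j - i)))"
    unfolding hom_eval_def
    by (rule sum.mono_neutral_right) (use assms in \<open>auto simp: coeff_eq_0\<close>)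
  also have "\<dots> = (\<Sum>i\<le>k. Y ^ j * Polynomial.smult (coeff p i) (X ^ i * Y ^ (k - i)))"
  proof (rule sum.cong [OF refl])
    fix i assume "i \<in> {..k}"
    then have "Y ^ (k + j - i) = Y ^ j * Y ^ (k - i)"
      by (simp add: power_add [symmetric] Nat.add_diff_assoc2 add.commute)
    then show "Polynomial.smult (coeff p i) (X ^ i * Y ^ (k + j - i)) =
        Y ^ j * Polynomial.smult (coeff p i) (X ^ i * Y ^ (k - i))"
      by (simp add: algebra_simps)
  qed
  finally show ?thesis
    by (simp add: hom_eval_def sum_distrib_left)
qed

lemma hom_eval_mult:
  assumes "degree g \<le> a" and "degree h \<le> b"
  shows "hom_eval (g * h) (a + b) X Y = hom_eval g a X Y * hom_eval h b X Y"
  using assms(1)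
proof (induction g arbitrary: a rule: pCons_induct)
  case 0
  then show ?case by simp
next
  case (pCons c p)
  show ?case
  proof (cases a)
    case 0
    with pCons.prems have "pCons c p = [:c:]"
      by (auto split: if_splits)
    moreover have "hom_eval [:c:] 0 X Y = [:c:]"
      by (simp add: hom_eval_def)
    ultimately show ?thesis
      using 0 by (simp add: hom_eval_smult)
  next
    case (Suc a')
    with pCons.prems have p: "degree p \<le> a'"
      by (auto split: if_splits)
    have "hom_eval (pCons c p * h) (a + b) X Y =
        Polynomial.smult c (hom_eval h (b + Suc a') X Y) + X * hom_eval (p * h) (a' + b) X Y"
      using Suc by (simp add: hom_eval_add hom_eval_smult hom_eval_pCons_Suc add.commute)
    also have "\<dots> = Polynomial.smult c (Y ^ Suc a' * hom_eval h b X Y) + X * (hom_eval p a' X Y * hom_eval h b X Y)"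
      using hom_eval_add_degree [OF assms(2), of "Suc a'"] pCons.IH [OF p] by (simp only:)
    also have "\<dots> = hom_eval (pCons c p) a X Y * hom_eval h b X Y"
      using Suc by (simp add: hom_eval_pCons_Suc algebra_simps)
    finally show ?thesis .
  qed
qed

lemma degree_hom_eval:
  fixes X Y :: "'a::idom poly"
  assumes "degree Y < degree X" and "p \<noteq> 0"
  shows "degree (hom_eval p (degree p) X Y) = degree X * degree p"
proof -
  let ?k = "degree p" and ?n = "degree X"
  let ?term = "\<lambda>i. Polynomial.smult (coeff p i) (X ^ i * Y ^ (?k - i))"
  have "X \<noteq> 0"
    using assms(1) by auto
  have lower_terms: "degree (?term i) < ?n * ?k" if "i < ?k" for i
  proof -
    have "degree (?term i) \<le> degree (X ^ i) + degree (Y ^ (?k - i))"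
      by (rule order_trans [OF degree_smult_le degree_mult_le])
    also have "\<dots> \<le> ?n * i + degree Y * (?k - i)"
      by (intro add_mono; rule order_trans [OF degree_power_le]) (simp_all add: mult.commute)
    also have "\<dots> < ?n * i + ?n * (?k - i)"
      using assms(1) that by simp
    also have "\<dots> = ?n * ?k"
      using that by (simp add: add_mult_distrib2 [symmetric])
    finally show ?thesis .
  qed
  have "{..?k} = insert ?k {..<?k}"
    by auto
  then have split: "hom_eval p ?k X Y = Polynomial.smult (lead_coeff p) (X ^ ?k) + (\<Sum>i<?k. ?term i)"
    by (simp add: hom_eval_def)
  show ?thesis
  proof (cases "?k = 0")
    case True
    then show ?thesis
      by (simp add: hom_eval_def)
  next
    case False
    have "degree (\<Sum>i<?k. ?term i) < ?n * ?k"
      by (rule degree_sum_less) (use lower_terms False assms(1) in auto)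
    with \<open>X \<noteq> 0\<close> assms(2) show ?thesis
      unfolding split by (subst degree_add_eq_left) (simp_all add: degree_power_eq mult.commute)
  qed
qed

lemma reducible_poly_hom_eval:
  fixes X Y :: "'a::field poly"
  assumes "reducible_poly p" and "degree Y < degree X"
  shows "reducible_poly (hom_eval p (degree p) X Y)"
proof -
  obtain g h where g: "degree g > 0" and h: "degree h > 0" and p: "p = g * h"
    using assms(1) unfolding reducible_poly_def by blast
  then have "g \<noteq> 0" "h \<noteq> 0"
    by auto
  then have "hom_eval p (degree p) X Y = hom_eval g (degree g) X Y * hom_eval h (degree h) X Y"
    unfolding p by (simp add: degree_mult_eq hom_eval_mult)
  moreover have "degree (hom_eval g (degree g) X Y) > 0"
    using degree_hom_eval [OF assms(2) \<open>g \<noteq> 0\<close>] assms(2) g by simp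
  moreover have "degree (hom_eval h (degree h) X Y) > 0"
    using degree_hom_eval [OF assms(2) \<open>h \<noteq> 0\<close>] assms(2) h by simp
  ultimately show ?thesis
    unfolding reducible_poly_def by blast
qed

lemma degree_Poly_less:
  assumes "xs \<noteq> []"
  shows "degree (Poly xs) < length xs"
proof -
  have "degree (Poly xs) \<le> length xs - 1"
    by (rule degree_le) (auto simp: nth_default_def)
  moreover have "length xs > 0"
    using assms by simp
  ultimately show ?thesis
    by linarith
qed

lemma f_TS_eq_hom_eval:
  assumes "T \<in> carrier_mat m m"
  shows "f_TS T S = hom_eval (char_poly T) m (monom 1 (length S)) (f_S S)"
  using assms by (simp add: f_TS_def hom_eval_def monom_power atLeast0AtMost)

theorem mainTheorem2:
  fixes T :: "'a::{field,finite} mat" and S :: "'a list" and m n :: nat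
  assumes "m \<ge> 1" and "n \<ge> 1"
    and "T \<in> carrier_mat m m" and "length S = n"
    and "reducible_poly (char_poly T)"
  shows "reducible_poly (f_TS T S)"
proof -
  have "S \<noteq> []"
    using assms(2,4) by auto
  then have "degree (f_S S) < degree (monom (1::'a) n)"
    using degree_Poly_less [of S] assms(4) by (simp add: f_S_def degree_monom_eq)
  moreover have "degree (char_poly T) = m"
    using degree_monic_char_poly [OF assms(3)] by simp
  ultimately show ?thesis
    using f_TS_eq_hom_eval [OF assms(3)] reducible_poly_hom_eval [OF assms(5)] assms(4) by simp
qed

end
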